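(* Let $k$ be a positive integer. (i) There is no function $f:\mathbb{N}\to\mathbb{N}$ such that $\gamma_{P,k}(G-v)\le f(\gamma_{P,k}(G))$ for every graph $G$ and every vertex $v$ of $G$. (ii) For every graph $G$ and every vertex $v$ of $G$, $\gamma_{P,k}(G-v)\ge \gamma_{P,k}(G)-1$. (iii) Moreover, if $\gamma_{P,k}(G-v)= \gamma_{P,k}(G)-1$, then $\mathrm{rad}_{P,k}(G)\le \mathrm{rad}_{P,k}(G-v)$.
   Context: All graphs are finite and simple; $G-v$ is obtained by deleting $v$ and its incident edges. $N_G[v]$ is the closed neighbourhood of $v$, and $N_G[S]$ the union of closed neighbourhoods of vertices of $S$. For $S\subseteq V(G)$, define $\mathcal{P}^{0}_{G,k}(S)=N_G[S]$ and $\mathcal{P}^{i+1}_{G,k}(S)=\bigcup\{N_G[v] : v\in \mathcal{P}^{i}_{G,k}(S),\ |N_G[v]\setminus \mathcal{P}^{i}_{G,k}(S)|\le k\}$; these increase and stabilize to $\mathcal{P}^{\infty}_{G,k}(S)$. $S$ is a $k$-power dominating set ($k$-PDS) if $\mathcal{P}^{\infty}_{G,k}(S)=V(G)$; $\gamma_{P,k}(G)$ is the minimum size of a $k$-PDS. For a $k$-PDS $S$, $\mathrm{rad}_{P,k}(G,S)=1+\min\{i:\mathcal{P}^{i}_{G,k}(S)=V(G)\}$, and $\mathrm{rad}_{P,k}(G)$ is the minimum of $\mathrm{rad}_{P,k}(G,S)$ over all $k$-PDS $S$ of $G$ with $|S|=\gamma_{P,k}(G)$. *)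

theory Defs
  imports Main
begin

definition graph :: "'a set \<Rightarrow> ('a \<Rightarrow> 'a \<Rightarrow> bool) \<Rightarrow> bool" where
  "graph V E \<longleftrightarrow> finite V \<and> (\<forall>u w. E u w \<longrightarrow> u \<in> V \<and> w \<in> V)
     \<and> (\<forall>u w. E u w \<longrightarrow> E w u) \<and> (\<forall>u. \<not> E u u)"

definition del_vert :: "'a set \<Rightarrow> 'a \<Rightarrow> 'a set" where
  "del_vert V v = V - {v}"

definition del_edges :: "('a \<Rightarrow> 'a \<Rightarrow> bool) \<Rightarrow> 'a \<Rightarrow> ('a \<Rightarrow> 'a \<Rightarrow> bool)" where
  "del_edges E v = (\<lambda>u w. E u w \<and> u \<noteq> v \<and> w \<noteq> v)"

definition cnbhd :: "('a \<Rightarrow> 'a \<Rightarrow> bool) \<Rightarrow> 'a \<Rightarrow> 'a set" where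
  "cnbhd E v = insert v {u. E v u}"

definition cnbhd_set :: "('a \<Rightarrow> 'a \<Rightarrow> bool) \<Rightarrow> 'a set \<Rightarrow> 'a set" where
  "cnbhd_set E S = (\<Union>v\<in>S. cnbhd E v)"

fun pdom :: "('a \<Rightarrow> 'a \<Rightarrow> bool) \<Rightarrow> nat \<Rightarrow> 'a set \<Rightarrow> nat \<Rightarrow> 'a set" where
  "pdom E k S 0 = cnbhd_set E S"
| "pdom E k S (Suc i) =
     \<Union>{cnbhd E v | v. v \<in> pdom E k S i \<and> card (cnbhd E v - pdom E k S i) \<le> k}"

definition pdom_inf :: "('a \<Rightarrow> 'a \<Rightarrow> bool) \<Rightarrow> nat \<Rightarrow> 'a set \<Rightarrow> 'a set" where
  "pdom_inf E k S = (\<Union>i. pdom E k S i)"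

definition is_kPDS :: "'a set \<Rightarrow> ('a \<Rightarrow> 'a \<Rightarrow> bool) \<Rightarrow> nat \<Rightarrow> 'a set \<Rightarrow> bool" where
  "is_kPDS V E k S \<longleftrightarrow> S \<subseteq> V \<and> pdom_inf E k S = V"

definition gammaPk :: "'a set \<Rightarrow> ('a \<Rightarrow> 'a \<Rightarrow> bool) \<Rightarrow> nat \<Rightarrow> nat" where
  "gammaPk V E k = (LEAST n. \<exists>S. is_kPDS V E k S \<and> card S = n)"

definition radPk_set :: "'a set \<Rightarrow> ('a \<Rightarrow> 'a \<Rightarrow> bool) \<Rightarrow> nat \<Rightarrow> 'a set \<Rightarrow> nat" where
  "radPk_set V E k S = 1 + (LEAST i. pdom E k S i = V)"

definition radPk :: "'a set \<Rightarrow> ('a \<Rightarrow> 'a \<Rightarrow> bool) \<Rightarrow> nat \<Rightarrow> nat" where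
  "radPk V E k = (LEAST r. \<exists>S. is_kPDS V E k S \<and> card S = gammaPk V E k
                              \<and> r = radPk_set V E k S)"

end

theory Submission
  imports Defs
begin

text \<open>If \<open>S\<close> is a \<open>k\<close>-PDS of \<open>G - v\<close>, then \<open>S \<union> {v}\<close> is a \<open>k\<close>-PDS of \<open>G\<close>, and stage by stage
  the propagation in \<open>G\<close> from \<open>S \<union> {v}\<close> observes everything the propagation in \<open>G - v\<close>
  from \<open>S\<close> observes: \<open>v\<close> is observed from the start, so a vertex \<open>w \<noteq> v\<close> has no more
  unobserved neighbours in \<open>G\<close> than in \<open>G - v\<close>. This gives (ii) and, when \<open>S \<union> {v}\<close> is
  minimum, (iii). For (i), the star \<open>K\<^sub>1\<^sub>,\<^sub>n\<close> has \<open>\<gamma>\<^sub>P\<^sub>,\<^sub>k = 1\<close>, while deleting its centre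
  leaves \<open>n\<close> isolated vertices, each of which must belong to every \<open>k\<close>-PDS.\<close>

lemma finite_cnbhd: "graph V E \<Longrightarrow> finite (cnbhd E w)"
  unfolding graph_def cnbhd_def
  by (metis (no_types, lifting) finite_insert finite_subset mem_Collect_eq subsetI)

lemma cnbhd_subset: "graph V E \<Longrightarrow> w \<in> V \<Longrightarrow> cnbhd E w \<subseteq> V"
  unfolding graph_def cnbhd_def by auto

lemma graph_del_vert: "graph V E \<Longrightarrow> graph (del_vert V v) (del_edges E v)"
  unfolding graph_def del_vert_def del_edges_def by auto

lemma pdom_subset: "graph V E \<Longrightarrow> S \<subseteq> V \<Longrightarrow> pdom E k S i \<subseteq> V"
proof (induction i)
  case 0
  then show ?case using cnbhd_subset[of V E] by (auto simp: cnbhd_set_def)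
next
  case (Suc i)
  then show ?case using cnbhd_subset[of V E] by fastforce
qed

lemma pdom_inf_subset: "graph V E \<Longrightarrow> S \<subseteq> V \<Longrightarrow> pdom_inf E k S \<subseteq> V"
  using pdom_subset unfolding pdom_inf_def by blast

lemma pdom_Suc_mono:
  assumes g: "graph V E"
  shows "pdom E k S i \<subseteq> pdom E k S (Suc i)"
proof (induction i)
  case 0
  show ?case
  proof
    fix u assume "u \<in> pdom E k S 0"
    then obtain s where s: "s \<in> S" "u \<in> cnbhd E s" by (auto simp: cnbhd_set_def)
    have "s \<in> pdom E k S 0" using s by (auto simp: cnbhd_set_def cnbhd_def)
    moreover have "cnbhd E s - pdom E k S 0 = {}" using s by (auto simp: cnbhd_set_def)
    then have "card (cnbhd E s - pdom E k S 0) \<le> k" by (metis card.empty zero_le)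
    ultimately show "u \<in> pdom E k S (Suc 0)" using s(2) by (simp only: pdom.simps(2)) blast
  qed
next
  case (Suc i)
  show ?case
  proof
    fix u assume "u \<in> pdom E k S (Suc i)"
    then obtain w where w: "w \<in> pdom E k S i" "card (cnbhd E w - pdom E k S i) \<le> k"
      "u \<in> cnbhd E w" by auto
    have "card (cnbhd E w - pdom E k S (Suc i)) \<le> card (cnbhd E w - pdom E k S i)"
      using Suc finite_cnbhd[OF g] by (intro card_mono) auto
    with w Suc have "w \<in> pdom E k S (Suc i)" "card (cnbhd E w - pdom E k S (Suc i)) \<le> k"
      by auto
    with w(3) show "u \<in> pdom E k S (Suc (Suc i))" by (simp only: pdom.simps(2)) blast
  qed
qed

lemma pdom_mono: "graph V E \<Longrightarrow> i \<le> j \<Longrightarrow> pdom E k S i \<subseteq> pdom E k S j"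
  using lift_Suc_mono_le[of "pdom E k S"] pdom_Suc_mono by metis

lemma subset_pdom: "graph V E \<Longrightarrow> S \<subseteq> pdom E k S i"
  using pdom_mono[of V E 0 i k S] by (auto simp: cnbhd_set_def cnbhd_def)

lemma kPDS_reaches_stage:
  assumes g: "graph V E" and S: "is_kPDS V E k S"
  shows "\<exists>i. pdom E k S i = V"
proof -
  have "\<exists>m. F \<subseteq> pdom E k S m" if "finite F" "F \<subseteq> V" for F
    using that
  proof (induction F rule: finite_induct)
    case empty
    then show ?case by auto
  next
    case (insert x F)
    then obtain m where m: "F \<subseteq> pdom E k S m" by auto
    from insert S obtain j where j: "x \<in> pdom E k S j"
      by (auto simp: is_kPDS_def pdom_inf_def)
    have "pdom E k S m \<subseteq> pdom E k S (max m j)" "pdom E k S j \<subseteq> pdom E k S (max m j)"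
      using pdom_mono[OF g] by simp_all
    with m j have "insert x F \<subseteq> pdom E k S (max m j)" by blast
    then show ?case by blast
  qed
  moreover have "finite V" using g by (simp add: graph_def)
  ultimately obtain m where "V \<subseteq> pdom E k S m" by blast
  then show ?thesis using pdom_subset[OF g, of S k m] S by (auto simp: is_kPDS_def)
qed

lemma dominating_is_kPDS:
  assumes "graph V E" "S \<subseteq> V" "cnbhd_set E S = V"
  shows "is_kPDS V E k S"
  using assms pdom_inf_subset[of V E S k] unfolding is_kPDS_def pdom_inf_def
  by (metis UNIV_I UN_upper pdom.simps(1) subset_antisym)

lemma pdom_del_vert_subset:
  assumes g: "graph V E" and v: "v \<in> V" and S: "S \<subseteq> V - {v}"
  shows "pdom (del_edges E v) k S i \<subseteq> pdom E k (insert v S) i"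
proof (induction i)
  case 0
  show ?case by (auto simp: cnbhd_set_def cnbhd_def del_edges_def)
next
  case (Suc i)
  let ?E' = "del_edges E v"
  have g': "graph (V - {v}) ?E'" using graph_del_vert[OF g] by (simp add: del_vert_def)
  show ?case
  proof
    fix u assume "u \<in> pdom ?E' k S (Suc i)"
    then obtain w where w: "w \<in> pdom ?E' k S i" "card (cnbhd ?E' w - pdom ?E' k S i) \<le> k"
      "u \<in> cnbhd ?E' w" by auto
    have "w \<in> V - {v}" using w(1) pdom_subset[OF g' S] by blast
    moreover have "v \<in> pdom E k (insert v S) i" using subset_pdom[OF g] by blast
    ultimately have "cnbhd E w - pdom E k (insert v S) i \<subseteq> cnbhd ?E' w - pdom ?E' k S i"
      using Suc by (auto simp: cnbhd_def del_edges_def)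
    then have "card (cnbhd E w - pdom E k (insert v S) i) \<le> k"
      using w(2) finite_cnbhd[OF g'] by (meson card_mono finite_Diff le_trans)
    moreover have "w \<in> pdom E k (insert v S) i" using Suc w(1) by blast
    moreover have "u \<in> cnbhd E w" using w(3) by (auto simp: cnbhd_def del_edges_def)
    ultimately show "u \<in> pdom E k (insert v S) (Suc i)" by (simp only: pdom.simps(2)) blast
  qed
qed

lemma pdom_insert_eq_if_pdom_del_vert_eq:
  assumes g: "graph V E" and v: "v \<in> V" and S: "S \<subseteq> V - {v}"
    and stage: "pdom (del_edges E v) k S i = V - {v}"
  shows "pdom E k (insert v S) i = V"
  using pdom_del_vert_subset[OF g v S, of k i] subset_pdom[OF g, of "insert v S" k i]
    pdom_subset[OF g, of "insert v S" k i] stage v S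
  by blast

lemma insert_is_kPDS:
  assumes g: "graph V E" and v: "v \<in> V"
    and S: "is_kPDS (del_vert V v) (del_edges E v) k S"
  shows "is_kPDS V E k (insert v S)"
proof -
  have S_sub: "S \<subseteq> V - {v}" using S by (auto simp: is_kPDS_def del_vert_def)
  obtain i where "pdom (del_edges E v) k S i = V - {v}"
    using kPDS_reaches_stage[OF graph_del_vert[OF g] S] by (auto simp: del_vert_def)
  then have "pdom E k (insert v S) i = V"
    by (rule pdom_insert_eq_if_pdom_del_vert_eq[OF g v S_sub])
  then show ?thesis
    using pdom_inf_subset[OF g, of "insert v S" k] v S_sub
    unfolding is_kPDS_def pdom_inf_def by blast
qed

lemma gammaPk_le_card: "is_kPDS V E k S \<Longrightarrow> gammaPk V E k \<le> card S"
  unfolding gammaPk_def by (rule Least_le) blast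

lemma gammaPk_attained:
  assumes g: "graph V E"
  shows "\<exists>S. is_kPDS V E k S \<and> card S = gammaPk V E k"
proof -
  have "is_kPDS V E k V"
    using g cnbhd_subset[OF g] by (intro dominating_is_kPDS) (auto simp: cnbhd_set_def cnbhd_def)
  then have "\<exists>n S. is_kPDS V E k S \<and> card S = n" by blast
  then show ?thesis unfolding gammaPk_def by (rule LeastI_ex)
qed

lemma radPk_le_radPk_set:
  "is_kPDS V E k S \<Longrightarrow> card S = gammaPk V E k \<Longrightarrow> radPk V E k \<le> radPk_set V E k S"
  unfolding radPk_def by (rule Least_le) blast

lemma radPk_attained:
  assumes g: "graph V E"
  shows "\<exists>S. is_kPDS V E k S \<and> card S = gammaPk V E k \<and> radPk V E k = radPk_set V E k S"
proof -
  have "\<exists>r S. is_kPDS V E k S \<and> card S = gammaPk V E k \<and> r = radPk_set V E k S"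
    using gammaPk_attained[OF g] by blast
  then show ?thesis unfolding radPk_def by (rule LeastI_ex)
qed

lemma radPk_set_le_Suc: "pdom E k S i = V \<Longrightarrow> radPk_set V E k S \<le> Suc i"
  unfolding radPk_set_def using Least_le[of "\<lambda>i. pdom E k S i = V" i] by simp

lemma pdom_radPk_set:
  "graph V E \<Longrightarrow> is_kPDS V E k S \<Longrightarrow> pdom E k S (radPk_set V E k S - 1) = V"
  using LeastI_ex[OF kPDS_reaches_stage] by (simp add: radPk_set_def)

lemma gammaPk_edgeless:
  assumes edgeless: "\<And>u w. \<not> E u w"
  shows "gammaPk V E k = card V"
proof -
  have cnbhd: "cnbhd E x = {x}" for x using edgeless by (auto simp: cnbhd_def)
  have "pdom E k S i \<subseteq> S" for S i
    by (induction i) (auto simp: cnbhd_set_def cnbhd)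
  moreover have "pdom E k S 0 = S" for S by (auto simp: cnbhd_set_def cnbhd)
  ultimately have "pdom_inf E k S = S" for S
    unfolding pdom_inf_def by (metis UNIV_I UN_least UN_upper subset_antisym)
  then have "is_kPDS V E k S \<longleftrightarrow> S = V" for S
    unfolding is_kPDS_def by auto
  then show ?thesis unfolding gammaPk_def by (intro Least_equality) auto
qed

lemma no_bound_gammaPk_del_vert:
  "\<not> (\<exists>f :: nat \<Rightarrow> nat. \<forall>(V :: nat set) E v. graph V E \<and> v \<in> V \<longrightarrow>
       gammaPk (del_vert V v) (del_edges E v) k \<le> f (gammaPk V E k))"
proof
  assume "\<exists>f :: nat \<Rightarrow> nat. \<forall>(V :: nat set) E v. graph V E \<and> v \<in> V \<longrightarrow>
            gammaPk (del_vert V v) (del_edges E v) k \<le> f (gammaPk V E k)"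
  then obtain f :: "nat \<Rightarrow> nat" where f: "\<And>(V :: nat set) E v. graph V E \<Longrightarrow> v \<in> V \<Longrightarrow>
            gammaPk (del_vert V v) (del_edges E v) k \<le> f (gammaPk V E k)" by blast
  define n where "n = max (f 0) (f 1) + 1"
  define V :: "nat set" where "V = {0..n}"
  define E :: "nat \<Rightarrow> nat \<Rightarrow> bool" where
    "E = (\<lambda>u w. (u = 0 \<and> w \<in> {1..n}) \<or> (w = 0 \<and> u \<in> {1..n}))"
  have g: "graph V E" unfolding graph_def V_def E_def by auto
  have "is_kPDS V E k {0}"
    using g by (intro dominating_is_kPDS) (auto simp: V_def E_def cnbhd_set_def cnbhd_def)
  then have "gammaPk V E k \<le> 1" using gammaPk_le_card by fastforce
  then have "f (gammaPk V E k) < n" unfolding n_def by (cases "gammaPk V E k") auto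
  moreover have "gammaPk (del_vert V 0) (del_edges E 0) k = card (del_vert V 0)"
    by (rule gammaPk_edgeless) (auto simp: del_vert_def V_def del_edges_def E_def)
  moreover have "card (del_vert V 0) = n" by (simp add: del_vert_def V_def)
  moreover have "0 \<in> V" by (simp add: V_def)
  then have "gammaPk (del_vert V 0) (del_edges E 0) k \<le> f (gammaPk V E k)" by (rule f[OF g])
  ultimately show False by linarith
qed

lemma gammaPk_le_gammaPk_del_vert_Suc:
  assumes g: "graph V E" and v: "v \<in> V"
  shows "gammaPk V E k \<le> gammaPk (del_vert V v) (del_edges E v) k + 1"
proof -
  obtain S where S: "is_kPDS (del_vert V v) (del_edges E v) k S"
    "card S = gammaPk (del_vert V v) (del_edges E v) k"
    using gammaPk_attained[OF graph_del_vert[OF g]] by blast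
  have "gammaPk V E k \<le> card (insert v S)"
    by (rule gammaPk_le_card[OF insert_is_kPDS[OF g v S(1)]])
  also have "\<dots> \<le> card S + 1" by (simp add: card_insert_le_m1)
  finally show ?thesis using S(2) by simp
qed

lemma radPk_le_radPk_del_vert:
  assumes g: "graph V E" and v: "v \<in> V"
    and tight: "gammaPk (del_vert V v) (del_edges E v) k + 1 = gammaPk V E k"
  shows "radPk V E k \<le> radPk (del_vert V v) (del_edges E v) k"
proof -
  let ?V' = "del_vert V v" and ?E' = "del_edges E v"
  have g': "graph ?V' ?E'" by (rule graph_del_vert[OF g])
  obtain S where S: "is_kPDS ?V' ?E' k S" "card S = gammaPk ?V' ?E' k"
    "radPk ?V' ?E' k = radPk_set ?V' ?E' k S"
    using radPk_attained[OF g'] by blast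
  have S_sub: "S \<subseteq> V - {v}" using S(1) by (auto simp: is_kPDS_def del_vert_def)
  have "finite S" using S_sub g finite_subset by (auto simp: graph_def)
  moreover have "v \<notin> S" using S_sub by blast
  ultimately have card_eq: "card (insert v S) = gammaPk V E k" using S(2) tight by simp
  define i where "i = radPk_set ?V' ?E' k S - 1"
  have "pdom ?E' k S i = V - {v}"
    using pdom_radPk_set[OF g' S(1)] by (simp add: i_def del_vert_def)
  then have "pdom E k (insert v S) i = V"
    by (rule pdom_insert_eq_if_pdom_del_vert_eq[OF g v S_sub])
  have "radPk V E k \<le> radPk_set V E k (insert v S)"
    by (rule radPk_le_radPk_set[OF insert_is_kPDS[OF g v S(1)] card_eq])
  also have "\<dots> \<le> Suc i" by (rule radPk_set_le_Suc) fact
  also have "\<dots> = radPk ?V' ?E' k" using S(3) by (simp add: i_def radPk_set_def)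
  finally show ?thesis .
qed

theorem mainTheorem2:
  fixes k :: nat
  assumes "k \<ge> 1"
  shows "(\<not> (\<exists>f :: nat \<Rightarrow> nat. \<forall>(V :: nat set) E v. graph V E \<and> v \<in> V \<longrightarrow>
              gammaPk (del_vert V v) (del_edges E v) k \<le> f (gammaPk V E k)))
    \<and> (\<forall>(V :: 'a set) E v. graph V E \<and> v \<in> V \<longrightarrow>
              gammaPk V E k \<le> gammaPk (del_vert V v) (del_edges E v) k + 1)
    \<and> (\<forall>(V :: 'a set) E v. graph V E \<and> v \<in> V
              \<and> gammaPk (del_vert V v) (del_edges E v) k + 1 = gammaPk V E k \<longrightarrow>
              radPk V E k \<le> radPk (del_vert V v) (del_edges E v) k)"
proof (intro conjI allI impI)
  show "\<not> (\<exists>f :: nat \<Rightarrow> nat. \<forall>(V :: nat set) E v. graph V E \<and> v \<in> V \<longrightarrow>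
          gammaPk (del_vert V v) (del_edges E v) k \<le> f (gammaPk V E k))"
    by (rule no_bound_gammaPk_del_vert)
next
  fix V :: "'a set" and E v
  assume "graph V E \<and> v \<in> V"
  then show "gammaPk V E k \<le> gammaPk (del_vert V v) (del_edges E v) k + 1"
    by (elim conjE) (rule gammaPk_le_gammaPk_del_vert_Suc)
next
  fix V :: "'a set" and E v
  assume "graph V E \<and> v \<in> V \<and> gammaPk (del_vert V v) (del_edges E v) k + 1 = gammaPk V E k"
  then show "radPk V E k \<le> radPk (del_vert V v) (del_edges E v) k"
    by (elim conjE) (rule radPk_le_radPk_del_vert)
qed
end
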